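(* Assume $p\in L_2(P_\eta)$ and let $n\in\mathbb N$. Then for $\lambda^n$-almost every $(y_1,\dots,y_n)\in B^n$, $$T_np(y_1,\dots,y_n)=\sum_{J\subset\{1,\dots,n\}}(-1)^{n-|J|}\,\mathbb E\,\lambda^*_{|J|}(\{y_j:j\in J\},\mu),$$ where $|J|$ denotes the cardinality of $J$.
   Context: $B\subset\mathbb R^d$ is a bounded Borel set with $|B|>0$; $\mathbf N$ is the space of finite integer-valued measures (finite point configurations) on $B$ with the $\sigma$-algebra generated by the maps $x\mapsto x(A)$, $A\subset B$ Borel. $\eta$ is a Poisson point process on $B$ with finite, atomless intensity measure $\lambda$ and distribution $P_\eta$. $\mu$ is a point process on $B$ with $dP_\mu=p\,dP_\eta$, $p:\mathbf N\to[0,\infty)$ measurable, $\int p\,dP_\eta=1$, and $p$ is hereditary: $p(x)>0$ implies $p(\tilde x)>0$ for every subconfiguration $\tilde x\subset x$. Difference operators: for a measurable $F:\mathbf N\to\mathbb R$ and $y\in B$, $D_yF(x)=F(x+\delta_y)-F(x)$; $D^0F=F$, $D^1_y=D_y$ and $D^n_{y_1,\dots,y_n}F=D_{y_1}D^{n-1}_{y_2,\dots,y_n}F$. Define $T_nF(y_1,\dots,y_n)=\mathbb E\,D^n_{y_1,\dots,y_n}F(\eta)$ (for the Poisson process $\eta$) and $T_0F=\mathbb E F(\eta)$. Conditional intensities: for $n\ge1$, $x\in\mathbf N$ and distinct $u_1,\dots,u_n\in B$ not in $x$, $\lambda^*_n(u_1,\dots,u_n,x)=p(x\cup\{u_1,\dots,u_n\})/p(x)$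 if $p(x)>0$ and $\lambda^*_n(u_1,\dots,u_n,x)=0$ if $p(x)=0$; $\lambda^*_0\equiv1$. The functions $\lambda^*_n$ are symmetric in $u_1,\dots,u_n$. *)

theory Defs
  imports "HOL-Probability.Probability" "HOL-Library.Multiset"
begin

text \<open>Finite point configurations on B are finite multisets of points of B
  (a finite integer-valued measure is a sum of Dirac masses).\<close>

definition configs :: "'a set \<Rightarrow> 'a multiset set" where
  "configs B = {x. set_mset x \<subseteq> B}"

definition cnt :: "'a multiset \<Rightarrow> 'a set \<Rightarrow> nat" where
  "cnt x A = size (filter_mset (\<lambda>y. y \<in> A) x)"

definition config_space :: "'a::topological_space set \<Rightarrow> 'a multiset measure" where
  "config_space B = sigma (configs B)
     {{x \<in> configs B. cnt x A = k} | A k. A \<in> sets borel \<and> A \<subseteq> B}"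

definition cfg_of :: "nat \<Rightarrow> (nat \<Rightarrow> 'a) \<Rightarrow> 'a multiset" where
  "cfg_of n f = mset (map f [0..<n])"

definition poisson_emeasure :: "'a::topological_space set \<Rightarrow> 'a measure \<Rightarrow> 'a multiset set \<Rightarrow> ennreal" where
  "poisson_emeasure B lam A =
     (\<Sum>n. ennreal (exp (- measure lam B) / fact n) *
        (\<integral>\<^sup>+ f. indicator A (cfg_of n f) \<partial>(PiM {..<n} (\<lambda>_. lam))))"

definition poisson_distr :: "'a::topological_space set \<Rightarrow> 'a measure \<Rightarrow> 'a multiset measure" where
  "poisson_distr B lam =
     measure_of (space (config_space B)) (sets (config_space B)) (poisson_emeasure B lam)"

fun diff_op :: "('a multiset \<Rightarrow> real) \<Rightarrow> 'a list \<Rightarrow> 'a multiset \<Rightarrow> real" where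
  "diff_op F [] = F"
| "diff_op F (y # ys) = (\<lambda>x. diff_op F ys (x + {#y#}) - diff_op F ys x)"

definition T_op :: "'a::topological_space set \<Rightarrow> 'a measure \<Rightarrow> ('a multiset \<Rightarrow> real) \<Rightarrow> nat \<Rightarrow> (nat \<Rightarrow> 'a) \<Rightarrow> real" where
  "T_op B lam F n y = (\<integral>x. diff_op F (map y [0..<n]) x \<partial>poisson_distr B lam)"

definition cond_int :: "('a multiset \<Rightarrow> real) \<Rightarrow> 'a multiset \<Rightarrow> 'a multiset \<Rightarrow> real" where
  "cond_int p u x = (if p x > 0 then p (x + u) / p x else 0)"

end

theory Submission
  imports Defs
begin

text \<open>Unfolding the iterated difference operator gives the inclusion-exclusion formula
  D^n p(x) = sum over J of (-1)^(n - |J|) p(x + y_J), and since p is hereditary,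
  p(x) lambda*(y_J, x) = p(x + y_J) for every x; integrating against the Poisson law therefore
  turns each term into the mu-expectation of lambda*(y_J, -). The only analytic point is that
  p(eta + y_J) is integrable for lambda^n-almost every y. Integrating also over y and splitting the
  Poisson law by the number m of points reduces this to the finiteness of
  sum over m of w_m a_(m+k), where w_m = exp(-lambda(B)) / m! and a_M is the integral of p over
  M-point configurations. Since w_m <= w_(m+k) (m+k)^k and M^k p <= M^(2k) + p^2, that sum is
  dominated by a moment of the Poisson distribution plus E p(eta)^2, which is finite
  because p is in L2.\<close>

lemma sum_Pow_lessThan_Suc:
  "(\<Sum>J\<in>Pow {..<Suc L}. h J) =
     (\<Sum>J\<in>Pow {..<L}. h (Suc ` J)) + (\<Sum>J\<in>Pow {..<L}. h (insert 0 (Suc ` J)))"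
proof -
  have Pow_Suc: "Pow (Suc ` {..<L}) = (\<lambda>J. Suc ` J) ` Pow {..<L}"
    by (auto simp: subset_image_iff image_iff) blast
  have inj_Suc: "inj_on (\<lambda>J. Suc ` J) (Pow {..<L})"
    by (rule inj_onI) (simp add: inj_image_eq_iff)
  have inj_insert: "inj_on (insert 0) (Pow (Suc ` {..<L}))"
  proof (rule inj_onI)
    fix X Y assume "X \<in> Pow (Suc ` {..<L})" "Y \<in> Pow (Suc ` {..<L})" "insert 0 X = insert 0 Y"
    then show "X = Y"
      by (metis Diff_insert_absorb PowD image_iff nat.distinct(1) subsetD)
  qed
  have "(\<Sum>J\<in>Pow {..<Suc L}. h J) =
      (\<Sum>J\<in>Pow (Suc ` {..<L}). h J) + (\<Sum>J\<in>insert 0 ` Pow (Suc ` {..<L}). h J)"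
    by (simp add: lessThan_Suc_eq_insert_0 Pow_insert, rule sum.union_disjoint) auto
  also have "(\<Sum>J\<in>insert 0 ` Pow (Suc ` {..<L}). h J) = (\<Sum>J\<in>Pow (Suc ` {..<L}). h (insert 0 J))"
    by (rule sum.reindex[OF inj_insert, unfolded o_def])
  finally show ?thesis
    unfolding Pow_Suc sum.reindex[OF inj_Suc, unfolded o_def] .
qed

definition cfg_on :: "nat set \<Rightarrow> (nat \<Rightarrow> 'a) \<Rightarrow> 'a multiset" where
  "cfg_on I f = image_mset f (mset_set I)"

lemma cfg_on_Suc_Cons: "finite J \<Longrightarrow> cfg_on (Suc ` J) (nth (y # ys)) = cfg_on J (nth ys)"
  by (simp add: cfg_on_def image_mset_mset_set[symmetric] multiset.map_comp o_def)

lemma cfg_on_insert: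
  "finite I \<Longrightarrow> i \<notin> I \<Longrightarrow> cfg_on (insert i I) f = add_mset (f i) (cfg_on I f)"
  by (simp add: cfg_on_def)

lemma diff_op_eq_sum_Pow:
  "diff_op F ys x =
     (\<Sum>J\<in>Pow {..<length ys}. (-1) ^ (length ys - card J) * F (x + cfg_on J (nth ys)))"
proof (induction ys arbitrary: x)
  case (Cons y ys)
  let ?L = "length ys"
  let ?S = "\<lambda>x. \<Sum>J\<in>Pow {..<?L}. (-1) ^ (?L - card J) * F (x + cfg_on J (nth ys))"
  have fin: "finite J" and card_le: "card J \<le> ?L" if "J \<in> Pow {..<?L}" for J
    using that finite_subset card_mono[of "{..<?L}" J] by auto
  have "(\<Sum>J\<in>Pow {..<Suc ?L}. (-1) ^ (Suc ?L - card J) * F (x + cfg_on J (nth (y # ys)))) =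
      - ?S x + ?S (x + {#y#})"
    unfolding sum_Pow_lessThan_Suc sum_negf[symmetric]
    using fin card_le
    by (intro arg_cong2[where f = "(+)"] sum.cong refl)
      (auto simp: card_image cfg_on_Suc_Cons cfg_on_insert Suc_diff_le)
  then show ?case
    using Cons by simp
qed (simp add: cfg_on_def)

lemma mult_cond_int:
  assumes "0 \<le> p x" "0 \<le> p (x + u)" "0 < p (x + u) \<Longrightarrow> 0 < p x"
  shows "p x * cond_int p u x = p (x + u)"
  using assms by (cases "p x > 0") (auto simp: cond_int_def less_eq_real_def)

lemma cfg_of_eq_cfg_on: "cfg_of n f = cfg_on {..<n} f"
  unfolding cfg_of_def cfg_on_def by (simp add: mset_upt atLeast0LessThan)

lemma cfg_on_Un:
  "finite I \<Longrightarrow> finite K \<Longrightarrow> I \<inter> K = {} \<Longrightarrow> cfg_on (I \<union> K) f = cfg_on I f + cfg_on K f"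
  by (simp add: cfg_on_def mset_set_Union)

lemma cfg_on_cong: "(\<And>i. i \<in> I \<Longrightarrow> f i = g i) \<Longrightarrow> cfg_on I f = cfg_on I g"
  unfolding cfg_on_def
  by (rule image_mset_cong) (metis elem_mset_set empty_iff mset_set.infinite set_mset_empty)

lemma cnt_plus [simp]: "cnt (x + y) A = cnt x A + cnt y A"
  by (simp add: cnt_def)

lemma cnt_cfg_on: "finite I \<Longrightarrow> cnt (cfg_on I f) A = (\<Sum>i\<in>I. indicator A (f i))"
  by (induction I rule: finite_induct) (auto simp: cnt_def cfg_on_def indicator_def)

lemma space_config_space: "space (config_space B) = configs B"
  unfolding config_space_def by (simp add: space_measure_of_conv)

lemma measurable_config_spaceI:
  assumes "\<And>x. x \<in> space M \<Longrightarrow> f x \<in> configs B"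
    and "\<And>A k. A \<in> sets borel \<Longrightarrow> A \<subseteq> B \<Longrightarrow> {x\<in>space M. cnt (f x) A = k} \<in> sets M"
  shows "f \<in> measurable M (config_space B)"
  unfolding config_space_def
proof (rule measurable_measure_of)
  fix X assume "X \<in> {{x \<in> configs B. cnt x A = k} | A k. A \<in> sets borel \<and> A \<subseteq> B}"
  then obtain A k where X: "X = {x \<in> configs B. cnt x A = k}" "A \<in> sets borel" "A \<subseteq> B"
    by blast
  have "f -` X \<inter> space M = {x\<in>space M. cnt (f x) A = k}"
    using X assms(1) by auto
  then show "f -` X \<inter> space M \<in> sets M"
    using assms(2) X by simp
qed (use assms(1) in auto)

lemma measurable_cnt:
  assumes "A \<in> sets borel" "A \<subseteq> B"
  shows "(\<lambda>x. cnt x A) \<in> measurable (config_space B) (count_space UNIV)"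
proof (rule measurable_count_space_eq2_countable[THEN iffD2], safe)
  fix k :: nat
  have "{x \<in> configs B. cnt x A = k} \<in> sets (config_space B)"
    unfolding config_space_def using assms by (subst sets_measure_of) (auto intro!: sigma_sets.Basic)
  then show "(\<lambda>x. cnt x A) -` {k} \<inter> space (config_space B) \<in> sets (config_space B)"
    by (simp add: space_config_space vimage_def Int_def conj_commute)
qed simp

lemma suminf_comm_ennreal: "(\<Sum>i. \<Sum>n. f i n :: ennreal) = (\<Sum>n. \<Sum>i. f i n)"
proof -
  have "(\<Sum>i. \<Sum>n. f i n) = (\<Sum>i. \<integral>\<^sup>+ n. f i n \<partial>count_space UNIV)"
    by (simp add: nn_integral_count_space_nat)
  also have "\<dots> = (\<integral>\<^sup>+ n. (\<Sum>i. f i n) \<partial>count_space UNIV)"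
    by (rule nn_integral_suminf[symmetric]) simp
  finally show ?thesis
    by (simp add: nn_integral_count_space_nat)
qed

lemma suminf_shift_le_ennreal: "(\<Sum>m. f (m + k) :: ennreal) \<le> (\<Sum>n. f n)"
  using suminf_offset[of f k] by (simp add: summableI)

lemma fact_add_le: "fact (m + k) \<le> (real (m + k)) ^ k * fact m"
proof (induction k)
  case (Suc k)
  have "fact (m + Suc k) = real (m + Suc k) * fact (m + k)"
    by (simp add: algebra_simps)
  also have "\<dots> \<le> real (m + Suc k) * ((real (m + Suc k)) ^ k * fact m)"
    using Suc by (intro mult_left_mono order.trans[OF Suc] mult_right_mono power_mono) auto
  finally show ?case
    by (simp add: algebra_simps)
qed simp

lemma mult_le_sum_squares:
  fixes a b :: real
  assumes "0 \<le> a" "0 \<le> b"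
  shows "a * b \<le> a\<^sup>2 + b\<^sup>2"
proof -
  have "0 \<le> (a - b)\<^sup>2" "0 \<le> a * b"
    using assms by simp_all
  then show ?thesis
    by (simp add: power2_eq_square algebra_simps)
qed

locale poisson_intensity =
  fixes B :: "'a::euclidean_space set" and lam :: "'a measure"
  assumes B_borel: "B \<in> sets borel"
    and lam_space: "space lam = B"
    and lam_sets: "sets lam = sets (restrict_space borel B)"
    and lam_finite: "emeasure lam B < \<infinity>"
begin

abbreviation "N \<equiv> config_space B"
abbreviation "P \<equiv> poisson_distr B lam"
abbreviation "PP I \<equiv> PiM I (\<lambda>_. lam)"
abbreviation "mass \<equiv> measure lam B"

definition weight :: "nat \<Rightarrow> real" where
  "weight n = exp (- mass) / fact n"

sublocale lam: finite_measure lam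
  by (rule finite_measureI) (use lam_finite lam_space in auto)

sublocale product: product_sigma_finite "\<lambda>_. lam" ..

lemma sigma_finite_PP: "finite I \<Longrightarrow> sigma_finite_measure (PP I)"
proof -
  assume "finite I"
  then interpret finite_product_sigma_finite "\<lambda>_. lam" I
    by (simp add: finite_product_sigma_finite_def finite_product_sigma_finite_axioms_def
        product.product_sigma_finite_axioms)
  show ?thesis ..
qed

lemma space_PP: "space (PP I) = PiE I (\<lambda>_. B)"
  by (simp add: space_PiM lam_space)

lemma emeasure_space_PP: "finite I \<Longrightarrow> emeasure (PP I) (space (PP I)) = ennreal (mass ^ card I)"
  using product.emeasure_PiM[of I "\<lambda>_. B"] lam.emeasure_eq_measure[of B]
  by (simp add: space_PP lam_space sets.top[of lam, unfolded lam_space] ennreal_power)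

lemma weight_nonneg: "0 \<le> weight n"
  by (simp add: weight_def)

lemma summable_weight_power: "summable (\<lambda>n. weight n * x ^ n)"
  using summable_mult[OF summable_exp[of x], of "exp (- mass)"]
  by (simp add: weight_def field_simps)

lemma weight_le: "weight m \<le> weight (m + k) * real (m + k) ^ k"
  using fact_add_le[of m k] unfolding weight_def
  by (simp add: field_simps)

lemma measurable_cnt_real [measurable]:
  "A \<in> sets borel \<Longrightarrow> A \<subseteq> B \<Longrightarrow> (\<lambda>x. real (cnt x A)) \<in> borel_measurable N"
  using measurable_compose[OF measurable_cnt[of A B], of real borel] by simp

lemma measurable_cfg_on [measurable]: "finite I \<Longrightarrow> cfg_on I \<in> measurable (PP I) N"
proof (rule measurable_config_spaceI)
  fix f assume "finite I" "f \<in> space (PP I)"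
  then show "cfg_on I f \<in> configs B"
    by (auto simp: configs_def cfg_on_def space_PP)
next
  fix A k assume I: "finite I" and A: "A \<in> sets borel" "A \<subseteq> B"
  have [measurable]: "A \<in> sets lam"
    using A B_borel unfolding lam_sets by (subst sets_restrict_space_iff) auto
  have "{x \<in> space (PP I). (\<Sum>i\<in>I. indicator A (x i) :: real) = real k} \<in> sets (PP I)"
    by measurable
  then show "{x \<in> space (PP I). cnt (cfg_on I x) A = k} \<in> sets (PP I)"
    using I by (simp add: cnt_cfg_on of_nat_sum indicator_def)
qed

lemma measurable_cfg_on_subset:
  assumes "finite J" "J \<subseteq> I"
  shows "cfg_on J \<in> measurable (PP I) N"
proof -
  have "(\<lambda>x. cfg_on J (restrict x J)) \<in> measurable (PP I) N"
    using measurable_compose[OF measurable_restrict_subset measurable_cfg_on] assms by simp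
  then show ?thesis
    by (simp add: cfg_on_cong[of J "restrict _ J"])
qed

lemma cfg_on_in_space: "y \<in> space (PP I) \<Longrightarrow> J \<subseteq> I \<Longrightarrow> cfg_on J y \<in> space N"
  by (cases "finite J") (auto simp: space_config_space configs_def cfg_on_def space_PP PiE_iff)

lemma measurable_plus_config [measurable]: "(\<lambda>z. fst z + snd z) \<in> measurable (N \<Otimes>\<^sub>M N) N"
proof (rule measurable_config_spaceI)
  fix z assume "z \<in> space (N \<Otimes>\<^sub>M N)"
  then show "fst z + snd z \<in> configs B"
    by (auto simp: space_pair_measure space_config_space configs_def)
next
  fix A k assume [measurable]: "A \<in> sets borel" "A \<subseteq> B"
  have "{z \<in> space (N \<Otimes>\<^sub>M N). real (cnt (fst z) A) + real (cnt (snd z) A) = real k} \<in> sets (N \<Otimes>\<^sub>M N)"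
    by measurable
  then show "{z \<in> space (N \<Otimes>\<^sub>M N). cnt (fst z + snd z) A = k} \<in> sets (N \<Otimes>\<^sub>M N)"
    by (simp flip: of_nat_add)
qed

lemma measurable_add_config [measurable]:
  "f \<in> measurable M N \<Longrightarrow> g \<in> measurable M N \<Longrightarrow> (\<lambda>x. f x + g x) \<in> measurable M N"
  using measurable_compose[OF measurable_Pair measurable_plus_config] by simp

lemma poisson_emeasure_eq:
  "poisson_emeasure B lam A =
     (\<Sum>n. ennreal (weight n) * (\<integral>\<^sup>+ f. indicator A (cfg_on {..<n} f) \<partial>PP {..<n}))"
  unfolding poisson_emeasure_def weight_def cfg_of_eq_cfg_on ..

lemma countably_additive_poisson_emeasure: "countably_additive (sets N) (poisson_emeasure B lam)"
proof (rule countably_additiveI)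
  fix F :: "nat \<Rightarrow> _" assume F: "range F \<subseteq> sets N" "disjoint_family F"
  have [measurable]: "F i \<in> sets N" for i
    using F by auto
  have "(\<Sum>i. poisson_emeasure B lam (F i)) =
      (\<Sum>i. \<Sum>n. ennreal (weight n) * (\<integral>\<^sup>+ f. indicator (F i) (cfg_on {..<n} f) \<partial>PP {..<n}))"
    by (simp add: poisson_emeasure_eq)
  also have "\<dots> = (\<Sum>n. \<Sum>i. ennreal (weight n) * (\<integral>\<^sup>+ f. indicator (F i) (cfg_on {..<n} f) \<partial>PP {..<n}))"
    by (rule suminf_comm_ennreal)
  also have "\<dots> = (\<Sum>n. ennreal (weight n) *
      (\<integral>\<^sup>+ f. (\<Sum>i. indicator (F i) (cfg_on {..<n} f)) \<partial>PP {..<n}))"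
    by (subst nn_integral_suminf) auto
  finally show "(\<Sum>i. poisson_emeasure B lam (F i)) = poisson_emeasure B lam (\<Union>(range F))"
    by (simp add: poisson_emeasure_eq suminf_indicator[OF F(2)])
qed

lemma sets_P [measurable_cong]: "sets P = sets N"
  unfolding poisson_distr_def by (simp add: sets.space_closed sets.sigma_sets_eq)

lemma space_P: "space P = configs B"
  unfolding poisson_distr_def by (simp add: space_measure_of_conv space_config_space)

lemma emeasure_P: "A \<in> sets N \<Longrightarrow> emeasure P A = poisson_emeasure B lam A"
  unfolding poisson_distr_def
proof (rule emeasure_measure_of_sigma)
  show "positive (sets N) (poisson_emeasure B lam)"
    by (simp add: positive_def poisson_emeasure_eq)
qed (use sets.sigma_algebra_axioms countably_additive_poisson_emeasure in auto)

lemma nn_integral_P: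
  assumes "g \<in> borel_measurable N"
  shows "(\<integral>\<^sup>+ x. g x \<partial>P) = (\<Sum>n. ennreal (weight n) * (\<integral>\<^sup>+ f. g (cfg_on {..<n} f) \<partial>PP {..<n}))"
  using assms
proof (induct rule: borel_measurable_induct)
  case (cong f g)
  have "(\<integral>\<^sup>+ x. f x \<partial>P) = (\<integral>\<^sup>+ x. g x \<partial>P)"
    using cong by (intro nn_integral_cong) (simp add: space_P space_config_space)
  moreover have "(\<integral>\<^sup>+ x. f (cfg_on {..<n} x) \<partial>PP {..<n}) = (\<integral>\<^sup>+ x. g (cfg_on {..<n} x) \<partial>PP {..<n})" for n
    using cong by (intro nn_integral_cong) (simp add: measurable_space[OF measurable_cfg_on])
  ultimately show ?case
    using cong by simp
next
  case (set A)
  then show ?case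
    by (simp add: emeasure_P poisson_emeasure_eq flip: nn_integral_indicator[of A P])
next
  case (mult u c)
  then show ?case
    by (simp add: nn_integral_cmult mult.left_commute[of c] ennreal_suminf_cmult[symmetric]
        del: ennreal_suminf_cmult)
next
  case (add u v)
  then show ?case
    by (simp add: nn_integral_add distrib_left suminf_add[symmetric])
next
  case (seq U)
  have [measurable]: "U i \<in> borel_measurable P" for i
    using seq by (simp add: measurable_cong_sets[OF sets_P refl])
  have mono: "incseq (\<lambda>i. U i (cfg_on {..<n} f))" for n f
    using seq(4) by (auto simp: incseq_def le_fun_def)
  have "(\<integral>\<^sup>+ x. (SUP i. U i) x \<partial>P) = (SUP i. \<integral>\<^sup>+ x. U i x \<partial>P)"
    using seq(4) by (simp add: image_comp nn_integral_monotone_convergence_SUP incseq_def le_fun_def)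
  also have "\<dots> = (SUP i. \<Sum>n. ennreal (weight n) * (\<integral>\<^sup>+ f. U i (cfg_on {..<n} f) \<partial>PP {..<n}))"
    using seq by simp
  also have "\<dots> = (\<Sum>n. SUP i. ennreal (weight n) * (\<integral>\<^sup>+ f. U i (cfg_on {..<n} f) \<partial>PP {..<n}))"
    using mono by (intro ennreal_suminf_SUP_eq[symmetric])
      (auto simp: incseq_def intro!: mult_left_mono nn_integral_mono)
  also have "\<dots> = (\<Sum>n. ennreal (weight n) * (\<integral>\<^sup>+ f. (SUP i. U i) (cfg_on {..<n} f) \<partial>PP {..<n}))"
  proof (intro suminf_cong)
    fix n
    have "(\<integral>\<^sup>+ f. (SUP i. U i) (cfg_on {..<n} f) \<partial>PP {..<n}) =
        (\<integral>\<^sup>+ f. (SUP i. U i (cfg_on {..<n} f)) \<partial>PP {..<n})"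
      by (simp add: image_comp)
    also have "\<dots> = (SUP i. \<integral>\<^sup>+ f. U i (cfg_on {..<n} f) \<partial>PP {..<n})"
      using seq mono by (intro nn_integral_monotone_convergence_SUP) (auto simp: incseq_def le_fun_def)
    finally have "(\<integral>\<^sup>+ f. (SUP i. U i) (cfg_on {..<n} f) \<partial>PP {..<n}) =
        (SUP i. \<integral>\<^sup>+ f. U i (cfg_on {..<n} f) \<partial>PP {..<n})" .
    then show "(SUP i. ennreal (weight n) * (\<integral>\<^sup>+ f. U i (cfg_on {..<n} f) \<partial>PP {..<n})) =
        ennreal (weight n) * (\<integral>\<^sup>+ f. (SUP i. U i) (cfg_on {..<n} f) \<partial>PP {..<n})"
      by (simp add: SUP_mult_left_ennreal)
  qed
  finally show ?case .
qed

lemma finite_measure_P: "finite_measure P"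
proof (rule finite_measureI)
  have "emeasure P (space P) = (\<Sum>n. ennreal (weight n * mass ^ n))"
    using nn_integral_P[of "\<lambda>_. 1"] by (simp add: emeasure_space_PP ennreal_mult weight_nonneg)
  also have "\<dots> \<noteq> \<infinity>"
    using summable_weight_power[of mass] unfolding infinity_ennreal_def
    by (rule ennreal_suminf_neq_top) (simp add: weight_nonneg)
  finally show "emeasure P (space P) \<noteq> \<infinity>" .
qed

sublocale P: finite_measure P
  by (rule finite_measure_P)

lemma distr_PP_reindex:
  assumes K: "finite K" and f: "bij_betw f I K"
  shows "distr (PP K) (PP I) (\<lambda>y. \<lambda>i\<in>I. y (f i)) = PP I"
proof -
  have I: "finite I"
    using f K bij_betw_finite by blast
  have fI: "i \<in> I \<Longrightarrow> f i \<in> K" for i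
    using f by (auto simp: bij_betw_def)
  let ?g = "inv_into I f"
  have gK: "k \<in> K \<Longrightarrow> ?g k \<in> I" "k \<in> K \<Longrightarrow> f (?g k) = k" for k
    using f by (auto simp: bij_betw_def inv_into_into f_inv_into_f)
  have gf: "i \<in> I \<Longrightarrow> ?g (f i) = i" for i
    using f by (auto simp: bij_betw_def)
  show ?thesis
  proof (rule product.PiM_eqI[OF I])
    fix A assume A: "\<And>i. i \<in> I \<Longrightarrow> A i \<in> sets lam"
    have AB: "i \<in> I \<Longrightarrow> A i \<subseteq> B" for i
      using sets.sets_into_space[OF A] lam_space by auto
    have "(\<lambda>y. \<lambda>i\<in>I. y (f i)) -` PiE I A \<inter> space (PP K) = PiE K (\<lambda>k. A (?g k))"
    proof (intro set_eqI iffI)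
      fix y assume "y \<in> (\<lambda>y. \<lambda>i\<in>I. y (f i)) -` PiE I A \<inter> space (PP K)"
      then show "y \<in> PiE K (\<lambda>k. A (?g k))"
        using gK by (auto simp: space_PP PiE_iff) metis
    next
      fix y assume "y \<in> PiE K (\<lambda>k. A (?g k))"
      then show "y \<in> (\<lambda>y. \<lambda>i\<in>I. y (f i)) -` PiE I A \<inter> space (PP K)"
        using gK gf fI AB by (fastforce simp: space_PP PiE_iff)
    qed
    moreover have "(\<lambda>y. \<lambda>i\<in>I. y (f i)) \<in> measurable (PP K) (PP I)"
      by (rule measurable_restrict) (auto intro: measurable_component_singleton fI)
    ultimately have "emeasure (distr (PP K) (PP I) (\<lambda>y. \<lambda>i\<in>I. y (f i))) (PiE I A) =
        (\<Prod>k\<in>K. emeasure lam (A (?g k)))"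
      using A K gK by (simp add: emeasure_distr sets_PiM_I_finite I product.emeasure_PiM)
    also have "\<dots> = (\<Prod>i\<in>I. emeasure lam (A i))"
      using prod.reindex_bij_betw[OF f, of "\<lambda>k. emeasure lam (A (?g k))"] gf by simp
    finally show "emeasure (distr (PP K) (PP I) (\<lambda>y. \<lambda>i\<in>I. y (f i))) (PiE I A) =
        (\<Prod>i\<in>I. emeasure lam (A i))" .
  qed simp
qed

lemma nn_integral_cfg_on_reindex:
  assumes K: "finite K" and f: "bij_betw f I K" and [measurable]: "h \<in> borel_measurable N"
  shows "(\<integral>\<^sup>+ x. h (cfg_on I x) \<partial>PP I) = (\<integral>\<^sup>+ y. h (cfg_on K y) \<partial>PP K)"
proof -
  have I: "finite I"
    using f K bij_betw_finite by blast
  have fI: "i \<in> I \<Longrightarrow> f i \<in> K" for i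
    using f by (auto simp: bij_betw_def)
  have "(\<lambda>y. \<lambda>i\<in>I. y (f i)) \<in> measurable (PP K) (PP I)"
    by (rule measurable_restrict) (auto intro: measurable_component_singleton fI)
  moreover have "(\<integral>\<^sup>+ x. h (cfg_on I x) \<partial>PP I) =
      (\<integral>\<^sup>+ x. h (cfg_on I x) \<partial>distr (PP K) (PP I) (\<lambda>y. \<lambda>i\<in>I. y (f i)))"
    by (simp add: distr_PP_reindex[OF K f])
  ultimately have "(\<integral>\<^sup>+ x. h (cfg_on I x) \<partial>PP I) = (\<integral>\<^sup>+ y. h (cfg_on I (\<lambda>i\<in>I. y (f i))) \<partial>PP K)"
    using I by (simp add: nn_integral_distr)
  also have "\<dots> = (\<integral>\<^sup>+ y. h (cfg_on K y) \<partial>PP K)"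
  proof (intro nn_integral_cong arg_cong[where f=h])
    fix y
    have "cfg_on I (\<lambda>i\<in>I. y (f i)) = cfg_on I (\<lambda>i. y (f i))"
      by (rule cfg_on_cong) simp
    also have "\<dots> = image_mset y (image_mset f (mset_set I))"
      by (simp add: cfg_on_def multiset.map_comp o_def)
    also have "\<dots> = cfg_on K y"
      using f by (simp add: image_mset_mset_set bij_betw_def cfg_on_def)
    finally show "cfg_on I (\<lambda>i\<in>I. y (f i)) = cfg_on K y" .
  qed
  finally show ?thesis .
qed

lemma nn_integral_cfg_on_card:
  assumes "finite I" "h \<in> borel_measurable N"
  shows "(\<integral>\<^sup>+ x. h (cfg_on I x) \<partial>PP I) = (\<integral>\<^sup>+ y. h (cfg_on {..<card I} y) \<partial>PP {..<card I})"
proof -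
  obtain f where "bij_betw f I {..<card I}"
    using assms(1) by (metis ex_bij_betw_finite_nat bij_betw_inv atLeast0LessThan)
  then show ?thesis
    using assms(2) by (intro nn_integral_cfg_on_reindex) auto
qed

lemma nn_integral_cfg_on_Un:
  assumes IK: "I \<inter> K = {}" "finite I" "finite K" and [measurable]: "h \<in> borel_measurable N"
  shows "(\<integral>\<^sup>+ z. h (cfg_on (I \<union> K) z) \<partial>PP (I \<union> K)) =
    (\<integral>\<^sup>+ x. \<integral>\<^sup>+ y. h (cfg_on I x + cfg_on K y) \<partial>PP K \<partial>PP I)"
proof -
  have merge_eq: "cfg_on (I \<union> K) (merge I K (x, y)) = cfg_on I x + cfg_on K y" for x y
  proof -
    have "cfg_on I (merge I K (x, y)) = cfg_on I x" "cfg_on K (merge I K (x, y)) = cfg_on K y"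
      using IK by (auto intro!: cfg_on_cong simp: merge_def)
    then show ?thesis
      using IK by (simp add: cfg_on_Un)
  qed
  moreover have "(\<integral>\<^sup>+ z. h (cfg_on (I \<union> K) z) \<partial>PP (I \<union> K)) =
      (\<integral>\<^sup>+ x. \<integral>\<^sup>+ y. h (cfg_on (I \<union> K) (merge I K (x, y))) \<partial>PP K \<partial>PP I)"
    using IK by (intro product.product_nn_integral_fold) auto
  ultimately show ?thesis
    by (simp only: merge_eq)
qed

lemma nn_integral_PP_restrict:
  assumes J: "J \<subseteq> I" "finite I" and [measurable]: "g \<in> borel_measurable (PP J)"
  shows "(\<integral>\<^sup>+ x. g (restrict x J) \<partial>PP I) = ennreal (mass ^ card (I - J)) * (\<integral>\<^sup>+ x. g x \<partial>PP J)"
proof -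
  have fin: "finite J" "finite (I - J)" and U: "J \<union> (I - J) = I"
    using J finite_subset by auto
  have "(\<integral>\<^sup>+ x. g (restrict x J) \<partial>PP I) =
      (\<integral>\<^sup>+ x. \<integral>\<^sup>+ y. g (restrict (merge J (I - J) (x, y)) J) \<partial>PP (I - J) \<partial>PP J)"
    using product.product_nn_integral_fold[of J "I - J" "\<lambda>x. g (restrict x J)"] fin U by simp
  also have "\<dots> = (\<integral>\<^sup>+ x. g x * ennreal (mass ^ card (I - J)) \<partial>PP J)"
    using fin emeasure_space_PP[of "I - J"] by (intro nn_integral_cong) (simp add: space_PiM lam_space)
  finally show ?thesis
    by (simp add: nn_integral_multc mult.commute)
qed

end

locale poisson_L2_density = poisson_intensity +
  fixes p :: "'a multiset \<Rightarrow> real"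
  assumes p_measurable [measurable]: "p \<in> borel_measurable N"
    and p_nonneg: "\<And>x. x \<in> space N \<Longrightarrow> p x \<ge> 0"
    and p_L2: "integrable P (\<lambda>x. (p x)^2)"
begin

definition int_p :: "nat \<Rightarrow> ennreal" where
  "int_p M = (\<integral>\<^sup>+ z. ennreal (p (cfg_on {..<M} z)) \<partial>PP {..<M})"

definition int_p2 :: "nat \<Rightarrow> ennreal" where
  "int_p2 M = (\<integral>\<^sup>+ z. ennreal ((p (cfg_on {..<M} z))^2) \<partial>PP {..<M})"

lemma suminf_weight_int_p2: "(\<Sum>M. ennreal (weight M) * int_p2 M) < \<infinity>"
proof -
  have "(\<integral>\<^sup>+ x. ennreal ((p x)^2) \<partial>P) < \<infinity>"
    using p_L2 by (simp add: integrable_iff_bounded)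
  then show ?thesis
    by (simp add: nn_integral_P int_p2_def)
qed

lemma int_p_bound: "ennreal (real M ^ k) * int_p M \<le> ennreal (real M ^ (2*k) * mass ^ M) + int_p2 M"
proof -
  have "ennreal (real M ^ k) * int_p M = (\<integral>\<^sup>+ z. ennreal (real M ^ k * p (cfg_on {..<M} z)) \<partial>PP {..<M})"
    unfolding int_p_def by (simp add: nn_integral_cmult[symmetric] ennreal_mult')
  also have "\<dots> \<le> (\<integral>\<^sup>+ z. ennreal (real M ^ (2*k)) + ennreal ((p (cfg_on {..<M} z))^2) \<partial>PP {..<M})"
  proof (intro nn_integral_mono)
    fix z assume "z \<in> space (PP {..<M})"
    then have "0 \<le> p (cfg_on {..<M} z)"
      using cfg_on_in_space[of z "{..<M}"] p_nonneg by simp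
    then have "real M ^ k * p (cfg_on {..<M} z) \<le> (real M ^ k)^2 + (p (cfg_on {..<M} z))^2"
      by (intro mult_le_sum_squares) auto
    then show "ennreal (real M ^ k * p (cfg_on {..<M} z)) \<le>
        ennreal (real M ^ (2*k)) + ennreal ((p (cfg_on {..<M} z))^2)"
      by (simp add: power_mult[symmetric] mult.commute flip: ennreal_plus)
  qed
  also have "\<dots> = ennreal (real M ^ (2*k) * mass ^ M) + int_p2 M"
    unfolding int_p2_def by (simp add: nn_integral_add emeasure_space_PP ennreal_mult)
  finally show ?thesis .
qed

lemma suminf_weight_moment: "(\<Sum>M. ennreal (weight M * real M ^ (2*k) * mass ^ M)) < \<infinity>"
proof -
  have "real M ^ (2*k) \<le> (2 ^ (2*k)) ^ M" for M
  proof -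
    have "real M ^ (2*k) \<le> (2 ^ M) ^ (2*k)"
      using less_exp[of M] by (intro power_mono) (simp_all add: less_imp_le flip: of_nat_less_iff)
    then show ?thesis
      by (metis power_mult mult.commute)
  qed
  then have "(\<Sum>M. ennreal (weight M * real M ^ (2*k) * mass ^ M)) \<le>
      (\<Sum>M. ennreal (weight M * (2 ^ (2*k) * mass) ^ M))"
    by (intro suminf_le summableI ennreal_leI)
      (simp add: power_mult_distrib mult.assoc mult_left_mono mult_right_mono weight_nonneg)
  also have "\<dots> < \<infinity>"
    unfolding infinity_ennreal_def less_top[symmetric]
    by (rule ennreal_suminf_neq_top[OF summable_weight_power]) (simp add: weight_nonneg)
  finally show ?thesis .
qed

lemma suminf_weight_int_p_shift: "(\<Sum>m. ennreal (weight m) * int_p (m + k)) < \<infinity>"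
proof -
  let ?g = "\<lambda>M. ennreal (weight M * real M ^ (2*k) * mass ^ M) + ennreal (weight M) * int_p2 M"
  have "ennreal (weight m) * int_p (m + k) \<le> ?g (m + k)" for m
  proof -
    have "ennreal (weight m) * int_p (m + k) \<le> ennreal (weight (m + k) * real (m + k) ^ k) * int_p (m + k)"
      by (intro mult_right_mono ennreal_leI weight_le) simp
    also have "\<dots> = ennreal (weight (m + k)) * (ennreal (real (m + k) ^ k) * int_p (m + k))"
      by (simp add: ennreal_mult weight_nonneg mult.assoc)
    also have "\<dots> \<le> ennreal (weight (m + k)) *
        (ennreal (real (m + k) ^ (2*k) * mass ^ (m + k)) + int_p2 (m + k))"
      by (intro mult_left_mono int_p_bound) simp
    finally show ?thesis
      by (simp add: distrib_left ennreal_mult weight_nonneg mult.assoc)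
  qed
  then have "(\<Sum>m. ennreal (weight m) * int_p (m + k)) \<le> (\<Sum>M. ?g M)"
    by (intro order.trans[OF suminf_le suminf_shift_le_ennreal[of ?g]] summableI)
  also have "\<dots> < \<infinity>"
    using suminf_weight_moment[of k] suminf_weight_int_p2
    by (simp add: suminf_add[symmetric] summableI ennreal_add_less_top)
  finally show ?thesis .
qed

lemma nn_integral_PP_shifted_cfg:
  assumes J: "J \<subseteq> {..<n}"
  shows "(\<integral>\<^sup>+ y. (\<integral>\<^sup>+ f. ennreal (p (cfg_on {..<m} f + cfg_on J y)) \<partial>PP {..<m}) \<partial>PP {..<n}) =
    ennreal (mass ^ (n - card J)) * int_p (m + card J)"
proof -
  define K where "K = {n..<n+m}"
  have finJ: "finite J" and finK: "finite K" and JK: "J \<inter> K = {}"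
    using J finite_subset by (auto simp: K_def)
  have bij: "bij_betw (\<lambda>i. n + i) {..<m} K"
    unfolding K_def bij_betw_def
  proof
    show "(+) n ` {..<m} = {n..<n + m}"
    proof (intro set_eqI iffI)
      fix x assume "x \<in> {n..<n + m}"
      then show "x \<in> (+) n ` {..<m}"
        by (intro image_eqI[of _ _ "x - n"]) auto
    qed auto
  qed simp
  have [measurable]: "cfg_on J \<in> measurable (PP J) N" "cfg_on K \<in> measurable (PP K) N"
    using finJ finK by auto
  interpret K: sigma_finite_measure "PP K"
    using finK by (rule sigma_finite_PP)
  define G where "G y = (\<integral>\<^sup>+ f. ennreal (p (cfg_on K f + cfg_on J y)) \<partial>PP K)" for y
  have [measurable]: "G \<in> borel_measurable (PP J)"
    unfolding G_def by measurable
  have "(\<integral>\<^sup>+ f. ennreal (p (cfg_on {..<m} f + cfg_on J y)) \<partial>PP {..<m}) = G (restrict y J)"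
    if y: "y \<in> space (PP {..<n})" for y
  proof -
    have [measurable]: "cfg_on J y \<in> space N"
      using cfg_on_in_space[OF y J] .
    have "(\<integral>\<^sup>+ f. ennreal (p (cfg_on {..<m} f + cfg_on J y)) \<partial>PP {..<m}) =
        (\<integral>\<^sup>+ f. ennreal (p (cfg_on K f + cfg_on J y)) \<partial>PP K)"
      by (rule nn_integral_cfg_on_reindex[OF finK bij]) measurable
    then show ?thesis
      unfolding G_def by (simp add: cfg_on_cong[of J "restrict y J" y])
  qed
  then have "(\<integral>\<^sup>+ y. (\<integral>\<^sup>+ f. ennreal (p (cfg_on {..<m} f + cfg_on J y)) \<partial>PP {..<m}) \<partial>PP {..<n}) =
      (\<integral>\<^sup>+ y. G (restrict y J) \<partial>PP {..<n})"
    by (rule nn_integral_cong)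
  also have "\<dots> = ennreal (mass ^ card ({..<n} - J)) * (\<integral>\<^sup>+ y. G y \<partial>PP J)"
    using J by (intro nn_integral_PP_restrict) auto
  also have "(\<integral>\<^sup>+ y. G y \<partial>PP J) = (\<integral>\<^sup>+ z. ennreal (p (cfg_on (J \<union> K) z)) \<partial>PP (J \<union> K))"
    unfolding G_def using nn_integral_cfg_on_Un[OF JK finJ finK, of "\<lambda>z. ennreal (p z)"]
    by (simp add: add.commute)
  also have "\<dots> = int_p (card (J \<union> K))"
    unfolding int_p_def using finJ finK by (intro nn_integral_cfg_on_card) auto
  finally show ?thesis
    using JK finJ finK J by (simp add: card_Un_disjoint K_def card_Diff_subset add.commute)
qed

lemma nn_integral_PP_shifted_P_finite:
  assumes J: "J \<subseteq> {..<n}"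
  shows "(\<integral>\<^sup>+ y. (\<integral>\<^sup>+ x. ennreal (p (x + cfg_on J y)) \<partial>P) \<partial>PP {..<n}) < \<infinity>"
proof -
  have [measurable]: "cfg_on J \<in> measurable (PP {..<n}) N"
    using J by (intro measurable_cfg_on_subset) (auto intro: finite_subset)
  have [measurable]: "(\<lambda>y. \<integral>\<^sup>+ f. ennreal (p (cfg_on {..<m} f + cfg_on J y)) \<partial>PP {..<m}) \<in>
      borel_measurable (PP {..<n})" for m
    by (rule sigma_finite_measure.borel_measurable_nn_integral[OF sigma_finite_PP]) measurable
  have "(\<integral>\<^sup>+ x. ennreal (p (x + cfg_on J y)) \<partial>P) =
      (\<Sum>m. ennreal (weight m) * (\<integral>\<^sup>+ f. ennreal (p (cfg_on {..<m} f + cfg_on J y)) \<partial>PP {..<m}))"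
    if "y \<in> space (PP {..<n})" for y
  proof -
    have [measurable]: "cfg_on J y \<in> space N"
      using cfg_on_in_space[OF that J] .
    show ?thesis
      by (rule nn_integral_P) measurable
  qed
  then have "(\<integral>\<^sup>+ y. (\<integral>\<^sup>+ x. ennreal (p (x + cfg_on J y)) \<partial>P) \<partial>PP {..<n}) =
      (\<integral>\<^sup>+ y. (\<Sum>m. ennreal (weight m) *
         (\<integral>\<^sup>+ f. ennreal (p (cfg_on {..<m} f + cfg_on J y)) \<partial>PP {..<m})) \<partial>PP {..<n})"
    by (rule nn_integral_cong)
  also have "\<dots> = (\<Sum>m. \<integral>\<^sup>+ y. ennreal (weight m) *
      (\<integral>\<^sup>+ f. ennreal (p (cfg_on {..<m} f + cfg_on J y)) \<partial>PP {..<m}) \<partial>PP {..<n})"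
    by (rule nn_integral_suminf) measurable
  also have "\<dots> = (\<Sum>m. ennreal (weight m) * (ennreal (mass ^ (n - card J)) * int_p (m + card J)))"
    by (simp add: nn_integral_cmult nn_integral_PP_shifted_cfg[OF J])
  also have "\<dots> = ennreal (mass ^ (n - card J)) * (\<Sum>m. ennreal (weight m) * int_p (m + card J))"
    by (subst ennreal_suminf_cmult[symmetric]) (rule suminf_cong, simp add: mult.left_commute)
  also have "\<dots> < \<infinity>"
    using suminf_weight_int_p_shift[of "card J"] by (simp add: ennreal_mult_less_top)
  finally show ?thesis .
qed

lemma AE_integrable_shifted:
  "AE y in PP {..<n}. \<forall>J\<in>Pow {..<n}. integrable P (\<lambda>x. p (x + cfg_on J y))"
proof (rule AE_finite_allI)
  fix J assume "J \<in> Pow {..<n}"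
  then have J: "J \<subseteq> {..<n}" by auto
  have [measurable]: "cfg_on J \<in> measurable (PP {..<n}) N"
    using J by (intro measurable_cfg_on_subset) (auto intro: finite_subset)
  have "(\<lambda>y. \<integral>\<^sup>+ x. ennreal (p (x + cfg_on J y)) \<partial>P) \<in> borel_measurable (PP {..<n})"
    by measurable
  then have "AE y in PP {..<n}. (\<integral>\<^sup>+ x. ennreal (p (x + cfg_on J y)) \<partial>P) \<noteq> \<infinity>"
    using nn_integral_PP_shifted_P_finite[OF J] by (rule nn_integral_noteq_infinite[OF _ less_imp_neq])
  then show "AE y in PP {..<n}. integrable P (\<lambda>x. p (x + cfg_on J y))"
  proof (rule AE_mp, intro AE_I2 impI)
    fix y assume y: "y \<in> space (PP {..<n})" and fin: "(\<integral>\<^sup>+ x. ennreal (p (x + cfg_on J y)) \<partial>P) \<noteq> \<infinity>"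
    have [measurable]: "cfg_on J y \<in> space N"
      using cfg_on_in_space[OF y J] .
    have "x + cfg_on J y \<in> space N" if "x \<in> space P" for x
      using that \<open>cfg_on J y \<in> space N\<close> by (auto simp: space_P space_config_space configs_def)
    then have "(\<integral>\<^sup>+ x. ennreal (norm (p (x + cfg_on J y))) \<partial>P) = (\<integral>\<^sup>+ x. ennreal (p (x + cfg_on J y)) \<partial>P)"
      using p_nonneg by (intro nn_integral_cong) simp
    with fin show "integrable P (\<lambda>x. p (x + cfg_on J y))"
      by (intro integrableI_bounded) (measurable, simp add: less_top)
  qed
qed simp

lemma integral_cond_int_density:
  assumes hered: "\<And>x x'. x \<in> space N \<Longrightarrow> p x > 0 \<Longrightarrow> x' \<subseteq># x \<Longrightarrow> p x' > 0"
    and u: "u \<in> space N"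
  shows "(\<integral>x. cond_int p u x \<partial>density P (\<lambda>x. ennreal (p x))) = (\<integral>x. p (x + u) \<partial>P)"
proof -
  have [measurable]: "cond_int p u \<in> borel_measurable N"
    using u unfolding cond_int_def by measurable
  have "x + u \<in> space N" if "x \<in> space P" for x
    using that u by (auto simp: space_P space_config_space configs_def)
  then have mult: "p x * cond_int p u x = p (x + u)" if "x \<in> space P" for x
    using that p_nonneg hered[of "x + u" x]
    by (intro mult_cond_int) (auto simp: space_P space_config_space)
  have "(\<integral>x. cond_int p u x \<partial>density P (\<lambda>x. ennreal (p x))) = (\<integral>x. p x *\<^sub>R cond_int p u x \<partial>P)"
    by (rule integral_density) (use p_nonneg in \<open>auto simp: space_P space_config_space\<close>)
  also have "\<dots> = (\<integral>x. p (x + u) \<partial>P)"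
    using mult by (intro Bochner_Integration.integral_cong) auto
  finally show ?thesis .
qed

lemma T_op_eq_sum_shifted:
  assumes "\<forall>J\<in>Pow {..<n}. integrable P (\<lambda>x. p (x + cfg_on J y))"
  shows "T_op B lam p n y = (\<Sum>J\<in>Pow {..<n}. (-1) ^ (n - card J) * (\<integral>x. p (x + cfg_on J y) \<partial>P))"
proof -
  have "cfg_on J (nth (map y [0..<n])) = cfg_on J y" if "J \<in> Pow {..<n}" for J
    using that by (intro cfg_on_cong) auto
  then have "T_op B lam p n y = (\<integral>x. (\<Sum>J\<in>Pow {..<n}. (-1) ^ (n - card J) * p (x + cfg_on J y)) \<partial>P)"
    by (simp add: T_op_def diff_op_eq_sum_Pow)
  also have "\<dots> = (\<Sum>J\<in>Pow {..<n}. (-1) ^ (n - card J) * (\<integral>x. p (x + cfg_on J y) \<partial>P))"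
    using assms by (simp add: Bochner_Integration.integral_sum)
  finally show ?thesis .
qed

end

theorem lemma2:
  fixes B :: "'a::euclidean_space set"
    and lam :: "'a measure"
    and p :: "'a multiset \<Rightarrow> real"
    and n :: nat
  assumes B_borel: "B \<in> sets borel"
    and B_bounded: "bounded B"
    and B_pos: "emeasure lborel B > 0"
    and lam_space: "space lam = B"
    and lam_sets: "sets lam = sets (restrict_space borel B)"
    and lam_finite: "emeasure lam B < \<infinity>"
    and lam_atomless: "\<And>y. y \<in> B \<Longrightarrow> emeasure lam {y} = 0"
    and p_meas: "p \<in> borel_measurable (config_space B)"
    and p_nonneg: "\<And>x. x \<in> space (config_space B) \<Longrightarrow> p x \<ge> 0"
    and p_int: "integrable (poisson_distr B lam) p"
    and p_norm: "(\<integral>x. p x \<partial>poisson_distr B lam) = 1"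
    and p_hered: "\<And>x x'. x \<in> space (config_space B) \<Longrightarrow> p x > 0 \<Longrightarrow> x' \<subseteq># x \<Longrightarrow> p x' > 0"
    and p_L2: "integrable (poisson_distr B lam) (\<lambda>x. (p x)\<^sup>2)"
  shows "AE y in PiM {..<n} (\<lambda>_. lam).
           T_op B lam p n y =
             (\<Sum>J\<in>Pow {..<n}. (-1) ^ (n - card J) *
                (\<integral>x. cond_int p (image_mset y (mset_set J)) x
                    \<partial>density (poisson_distr B lam) (\<lambda>x. ennreal (p x))))"
proof -
  interpret poisson_L2_density B lam p
    by unfold_locales (fact B_borel lam_space lam_sets lam_finite p_meas p_nonneg p_L2)+
  show ?thesis
    using AE_integrable_shifted
  proof (rule AE_mp, intro AE_I2 impI)
    fix y assume y: "y \<in> space (PP {..<n})"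
      and integrable: "\<forall>J\<in>Pow {..<n}. integrable P (\<lambda>x. p (x + cfg_on J y))"
    from integrable have "T_op B lam p n y = (\<Sum>J\<in>Pow {..<n}. (-1) ^ (n - card J) * (\<integral>x. p (x + cfg_on J y) \<partial>P))"
      by (rule T_op_eq_sum_shifted)
    also have "\<dots> = (\<Sum>J\<in>Pow {..<n}. (-1) ^ (n - card J) *
        (\<integral>x. cond_int p (cfg_on J y) x \<partial>density P (\<lambda>x. ennreal (p x))))"
      using cfg_on_in_space[OF y] by (intro sum.cong refl) (simp add: integral_cond_int_density[OF p_hered])
    finally show "T_op B lam p n y = (\<Sum>J\<in>Pow {..<n}. (-1) ^ (n - card J) *
        (\<integral>x. cond_int p (image_mset y (mset_set J)) x \<partial>density P (\<lambda>x. ennreal (p x))))"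
      by (simp only: cfg_on_def)
  qed
qed

end
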